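(* Define the bilinear forms on $\mathbb{R}^E$ $$\Omega(u,w)=\sum_\alpha\big(\langle c_\alpha,u\rangle\langle e_\alpha,w\rangle-\langle e_\alpha,u\rangle\langle c_\alpha,w\rangle\big),\qquad {*\Omega}(u,w)=\sum_\mu\big(\langle c_\mu,u\rangle\langle e_\mu,w\rangle-\langle e_\mu,u\rangle\langle c_\mu,w\rangle\big).$$ Then $\Omega={*\Omega}$.
   Context: Setup. Let $G=(V,E)$ be a finite connected graph with oriented edges (loops and multiple edges allowed), with edge space $\mathbb{R}^{E}$ carrying the Euclidean inner product $\langle\cdot,\cdot\rangle$, each edge identified with its standard basis vector. Fix a spanning tree $T\subseteq E$ of the underlying undirected graph. Edges in $T$ are cochords $e_\mu$, $\mu=1,\dots,|V|-1$; edges not in $T$ are chords $e_\alpha$, $\alpha=|V|,\dots,|E|$. For a chord $e_\alpha$, $T\cup\{e_\alpha\}$ contains a unique cycle; $c_\alpha\in\mathbb{R}^E$ has entry $+1$ (resp. $-1$) on each edge of this cycle whose orientation agrees (resp. disagrees) with traversal of the cycle in the direction of $e_\alpha$, and $0$ elsewhere. For a cochord $e_\mu$, $T\setminus\{e_\mu\}$ has two components; let $S_\mu$ be the vertex set of the component containing the tail of $e_\mu$; $c_\mu\in\mathbb{R}^E$ has entry $+1$ on edges with tail in $S_\mu$ and head not in $S_\mu$, $-1$ on edges with head in $S_\mu$ and tail not in $S_\mu$, and $0$ elsewhere. *)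

theory Defs
  imports Complex_Main
begin

text \<open>An oriented graph with vertex set V, edge set E and tail/head maps
(loops and multiple edges allowed).  A step of an undirected walk is a pair
(e, d): d = True traverses e from its tail to its head, d = False backwards.\<close>

definition step_src :: "('e \<Rightarrow> 'v) \<Rightarrow> ('e \<Rightarrow> 'v) \<Rightarrow> 'e \<times> bool \<Rightarrow> 'v" where
  "step_src tail head s = (if snd s then tail (fst s) else head (fst s))"

definition step_dst :: "('e \<Rightarrow> 'v) \<Rightarrow> ('e \<Rightarrow> 'v) \<Rightarrow> 'e \<times> bool \<Rightarrow> 'v" where
  "step_dst tail head s = (if snd s then head (fst s) else tail (fst s))"

fun is_walk :: "('e \<Rightarrow> 'v) \<Rightarrow> ('e \<Rightarrow> 'v) \<Rightarrow> 'e set \<Rightarrow> 'v \<Rightarrow> ('e \<times> bool) list \<Rightarrow> 'v \<Rightarrow> bool" where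
  "is_walk tail head S u [] v = (u = v)"
| "is_walk tail head S u (s # ws) v =
     (fst s \<in> S \<and> step_src tail head s = u \<and> is_walk tail head S (step_dst tail head s) ws v)"

definition walk_verts :: "('e \<Rightarrow> 'v) \<Rightarrow> ('e \<Rightarrow> 'v) \<Rightarrow> 'v \<Rightarrow> ('e \<times> bool) list \<Rightarrow> 'v list" where
  "walk_verts tail head u ws = u # map (step_dst tail head) ws"

text \<open>A cycle in S based at u: nonempty closed walk, with pairwise distinct edges and
pairwise distinct vertices apart from the repeated base point (loops are 1-cycles,
two parallel edges form a 2-cycle).\<close>
definition is_cycle :: "('e \<Rightarrow> 'v) \<Rightarrow> ('e \<Rightarrow> 'v) \<Rightarrow> 'e set \<Rightarrow> 'v \<Rightarrow> ('e \<times> bool) list \<Rightarrow> bool" where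
  "is_cycle tail head S u ws \<longleftrightarrow> ws \<noteq> [] \<and> is_walk tail head S u ws u \<and> distinct (map fst ws)
      \<and> distinct (List.tl (walk_verts tail head u ws))"

definition connected_by :: "'v set \<Rightarrow> ('e \<Rightarrow> 'v) \<Rightarrow> ('e \<Rightarrow> 'v) \<Rightarrow> 'e set \<Rightarrow> bool" where
  "connected_by V tail head S \<longleftrightarrow> (\<forall>u\<in>V. \<forall>v\<in>V. \<exists>ws. is_walk tail head S u ws v)"

definition graph :: "'v set \<Rightarrow> 'e set \<Rightarrow> ('e \<Rightarrow> 'v) \<Rightarrow> ('e \<Rightarrow> 'v) \<Rightarrow> bool" where
  "graph V E tail head \<longleftrightarrow> finite V \<and> finite E \<and> V \<noteq> {} \<and> (\<forall>e\<in>E. tail e \<in> V \<and> head e \<in> V)"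

definition spanning_tree :: "'v set \<Rightarrow> 'e set \<Rightarrow> ('e \<Rightarrow> 'v) \<Rightarrow> ('e \<Rightarrow> 'v) \<Rightarrow> 'e set \<Rightarrow> bool" where
  "spanning_tree V E tail head T \<longleftrightarrow> T \<subseteq> E \<and> connected_by V tail head T
      \<and> \<not> (\<exists>u ws. is_cycle tail head T u ws)"

definition edge_inner :: "'e set \<Rightarrow> ('e \<Rightarrow> real) \<Rightarrow> ('e \<Rightarrow> real) \<Rightarrow> real" where
  "edge_inner E u w = (\<Sum>f\<in>E. u f * w f)"

definition basis_vec :: "'e \<Rightarrow> 'e \<Rightarrow> real" where
  "basis_vec e = (\<lambda>f. if f = e then 1 else 0)"

text \<open>Fundamental cycle vector of a chord a: the unique cycle of T \<union> {a}, traversed in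
the direction of a (i.e. starting at the tail of a with the step (a, True)).\<close>
definition chord_vec :: "('e \<Rightarrow> 'v) \<Rightarrow> ('e \<Rightarrow> 'v) \<Rightarrow> 'e set \<Rightarrow> 'e \<Rightarrow> 'e \<Rightarrow> real" where
  "chord_vec tail head T a =
     (let ws = (SOME ws. is_cycle tail head (T \<union> {a}) (tail a) ws \<and> List.hd ws = (a, True))
      in (\<lambda>f. if (f, True) \<in> set ws then 1 else if (f, False) \<in> set ws then -1 else 0))"

definition cochord_side :: "'v set \<Rightarrow> ('e \<Rightarrow> 'v) \<Rightarrow> ('e \<Rightarrow> 'v) \<Rightarrow> 'e set \<Rightarrow> 'e \<Rightarrow> 'v set" where
  "cochord_side V tail head T m = {v\<in>V. \<exists>ws. is_walk tail head (T - {m}) (tail m) ws v}"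

definition cochord_vec :: "'v set \<Rightarrow> 'e set \<Rightarrow> ('e \<Rightarrow> 'v) \<Rightarrow> ('e \<Rightarrow> 'v) \<Rightarrow> 'e set \<Rightarrow> 'e \<Rightarrow> 'e \<Rightarrow> real" where
  "cochord_vec V E tail head T m =
     (let S = cochord_side V tail head T m
      in (\<lambda>f. if f \<in> E \<and> tail f \<in> S \<and> head f \<notin> S then 1
              else if f \<in> E \<and> head f \<in> S \<and> tail f \<notin> S then -1 else 0))"

definition Omega :: "'v set \<Rightarrow> 'e set \<Rightarrow> ('e \<Rightarrow> 'v) \<Rightarrow> ('e \<Rightarrow> 'v) \<Rightarrow> 'e set
                     \<Rightarrow> ('e \<Rightarrow> real) \<Rightarrow> ('e \<Rightarrow> real) \<Rightarrow> real" where
  "Omega V E tail head T u w =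
     (\<Sum>a\<in>E - T. edge_inner E (chord_vec tail head T a) u * edge_inner E (basis_vec a) w
                 - edge_inner E (basis_vec a) u * edge_inner E (chord_vec tail head T a) w)"

definition star_Omega :: "'v set \<Rightarrow> 'e set \<Rightarrow> ('e \<Rightarrow> 'v) \<Rightarrow> ('e \<Rightarrow> 'v) \<Rightarrow> 'e set
                     \<Rightarrow> ('e \<Rightarrow> real) \<Rightarrow> ('e \<Rightarrow> real) \<Rightarrow> real" where
  "star_Omega V E tail head T u w =
     (\<Sum>m\<in>T. edge_inner E (cochord_vec V E tail head T m) u * edge_inner E (basis_vec m) w
             - edge_inner E (basis_vec m) u * edge_inner E (cochord_vec V E tail head T m) w)"

end

theory Submission
  imports Defs
begin

(* Write C_a for the fundamental cycle vector of a chord a and K_m for the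
   fundamental cut vector of a cochord m.  Three facts about them suffice:
   (i)   C_a a = 1 and C_a vanishes on every other chord (the cycle lies in T + a);
   (ii)  K_m m = 1 and K_m vanishes on every other tree edge (T - m does not cross the cut);
   (iii) K_m a = - C_a m, because a cycle is orthogonal to a cut: the cut vector is the
         coboundary of the indicator of the side S_m, and coboundaries sum to zero
         along any closed walk.
   Given (i)-(iii), both Omega and *Omega expand to the same double sum
   sum_{a chord} sum_{m in T} C_a m (u m w a - u a w m), which is pure linear algebra. *)

section \<open>Walks\<close>

lemma is_walk_append:
  "is_walk tail head S u (xs @ ys) v \<longleftrightarrow>
     (\<exists>w. is_walk tail head S u xs w \<and> is_walk tail head S w ys v)"
  by (induction xs arbitrary: u) auto

lemma is_walk_mono:
  "is_walk tail head S u ws v \<Longrightarrow> S \<subseteq> S' \<Longrightarrow> is_walk tail head S' u ws v"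
  by (induction ws arbitrary: u) auto

lemma is_walk_edges: "is_walk tail head S u ws v \<Longrightarrow> fst ` set ws \<subseteq> S"
  by (induction ws arbitrary: u) auto

definition reverse_walk :: "('e \<times> bool) list \<Rightarrow> ('e \<times> bool) list" where
  "reverse_walk ws = rev (map (\<lambda>(e, d). (e, \<not> d)) ws)"

lemma is_walk_reverse:
  "is_walk tail head S u ws v \<Longrightarrow> is_walk tail head S v (reverse_walk ws) u"
  by (induction ws arbitrary: u)
     (auto simp: reverse_walk_def is_walk_append step_src_def step_dst_def)

lemma walk_verts_Cons:
  "walk_verts tail head u (s # ws) = u # walk_verts tail head (step_dst tail head s) ws"
  by (simp add: walk_verts_def)

lemma path_suffix:
  assumes "is_walk tail head S x ps v" "distinct (walk_verts tail head x ps)"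
    and "u \<in> set (walk_verts tail head x ps)"
  shows "\<exists>qs. is_walk tail head S u qs v \<and> distinct (walk_verts tail head u qs)"
  using assms
proof (induction ps arbitrary: x)
  case Nil
  then show ?case by (intro exI[of _ "[]"]) (auto simp: walk_verts_def)
next
  case (Cons t ps)
  show ?case
  proof (cases "u = x")
    case True
    then show ?thesis using Cons.prems(1,2) by blast
  next
    case False
    then show ?thesis
      using Cons.prems Cons.IH[of "step_dst tail head t"] by (simp add: walk_verts_Cons)
  qed
qed

lemma walk_to_path:
  "is_walk tail head S u ws v \<Longrightarrow>
     \<exists>ps. is_walk tail head S u ps v \<and> distinct (walk_verts tail head u ps)"
proof (induction ws arbitrary: u)
  case Nil
  then show ?case by (intro exI[of _ "[]"]) (auto simp: walk_verts_def)
next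
  case (Cons s ws)
  let ?y = "step_dst tail head s"
  from Cons.prems have s: "fst s \<in> S" "step_src tail head s = u"
    and w: "is_walk tail head S ?y ws v" by auto
  from Cons.IH[OF w] obtain ps where ps: "is_walk tail head S ?y ps v"
    "distinct (walk_verts tail head ?y ps)" by blast
  show ?case
  proof (cases "u \<in> set (walk_verts tail head ?y ps)")
    case True
    from path_suffix[OF ps True] show ?thesis .
  next
    case False
    then have "is_walk tail head S u (s # ps) v \<and> distinct (walk_verts tail head u (s # ps))"
      using ps s by (simp add: walk_verts_Cons)
    then show ?thesis by blast
  qed
qed

lemma walk_step_verts:
  "is_walk tail head S x ps v \<Longrightarrow> s \<in> set ps \<Longrightarrow>
     step_src tail head s \<in> set (walk_verts tail head x ps) \<and>
     step_dst tail head s \<in> set (walk_verts tail head x ps)"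
  by (induction ps arbitrary: x) (auto simp: walk_verts_Cons walk_verts_def)

text \<open>A path never uses an edge twice: both end points of a reused edge would repeat.\<close>
lemma path_distinct_edges:
  "is_walk tail head S x ps v \<Longrightarrow> distinct (walk_verts tail head x ps) \<Longrightarrow> distinct (map fst ps)"
proof (induction ps arbitrary: x)
  case Nil
  then show ?case by simp
next
  case (Cons t ps)
  let ?y = "step_dst tail head t"
  have w: "is_walk tail head S ?y ps v" and src: "step_src tail head t = x"
    using Cons.prems(1) by auto
  have d: "distinct (walk_verts tail head ?y ps)" "x \<notin> set (walk_verts tail head ?y ps)"
    using Cons.prems(2) by (auto simp: walk_verts_Cons)
  have "fst t \<notin> fst ` set ps"
  proof
    assume "fst t \<in> fst ` set ps"
    then obtain s where s: "s \<in> set ps" "fst s = fst t" by auto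
    then have "step_src tail head s = x \<or> step_dst tail head s = x"
      using src by (auto simp: step_src_def step_dst_def split: if_splits)
    then show False using walk_step_verts[OF w s(1)] d(2) by auto
  qed
  then show ?case using Cons.IH[OF w d(1)] by simp
qed

lemma fundamental_cycle:
  assumes walk: "is_walk tail head S (head e) ws (tail e)" and e: "e \<notin> S"
  shows "\<exists>ps. is_cycle tail head (S \<union> {e}) (tail e) ((e, True) # ps)"
proof -
  from walk_to_path[OF walk] obtain ps where ps: "is_walk tail head S (head e) ps (tail e)"
    "distinct (walk_verts tail head (head e) ps)" by blast
  have "e \<notin> fst ` set ps" using is_walk_edges[OF ps(1)] e by auto
  then have "is_cycle tail head (S \<union> {e}) (tail e) ((e, True) # ps)"
    using is_walk_mono[OF ps(1), of "S \<union> {e}"] path_distinct_edges[OF ps] ps(2)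
    by (auto simp: is_cycle_def walk_verts_Cons step_src_def step_dst_def)
  then show ?thesis by blast
qed

section \<open>Fundamental cuts\<close>

text \<open>The side S_m contains the tail but not the head of m (otherwise T - m joins them and
  m closes a cycle in T), and no other tree edge crosses it.\<close>
lemma cochord_side:
  assumes G: "graph V E tail head" and ST: "spanning_tree V E tail head T" and m: "m \<in> T"
  defines "S \<equiv> cochord_side V tail head T m"
  shows "tail m \<in> S" and "head m \<notin> S"
    and "\<And>f. f \<in> T - {m} \<Longrightarrow> tail f \<in> S \<longleftrightarrow> head f \<in> S"
proof -
  have in_V: "tail f \<in> V" "head f \<in> V" if "f \<in> T" for f
    using G ST that by (auto simp: graph_def spanning_tree_def)
  show "tail m \<in> S"
    using in_V[OF m] by (auto simp: S_def cochord_side_def intro: exI[of _ "[]"])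
  show "head m \<notin> S"
  proof
    assume "head m \<in> S"
    then obtain ws where "is_walk tail head (T - {m}) (tail m) ws (head m)"
      by (auto simp: S_def cochord_side_def)
    from fundamental_cycle[OF is_walk_reverse[OF this]] obtain ps
      where "is_cycle tail head (T - {m} \<union> {m}) (tail m) ((m, True) # ps)" by blast
    then show False using ST m by (auto simp: spanning_tree_def insert_absorb)
  qed
  fix f assume f: "f \<in> T - {m}"
  have forward: "is_walk tail head (T - {m}) (tail m) (ws @ [(f, True)]) (head f)"
    if "is_walk tail head (T - {m}) (tail m) ws (tail f)" for ws
    using that f by (auto simp: is_walk_append step_src_def step_dst_def)
  have backward: "is_walk tail head (T - {m}) (tail m) (ws @ [(f, False)]) (tail f)"
    if "is_walk tail head (T - {m}) (tail m) ws (head f)" for ws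
    using that f by (auto simp: is_walk_append step_src_def step_dst_def)
  show "tail f \<in> S \<longleftrightarrow> head f \<in> S"
    using in_V f forward backward unfolding S_def cochord_side_def by blast
qed

lemma cochord_vec_on_tree:
  assumes G: "graph V E tail head" and ST: "spanning_tree V E tail head T" and m: "m \<in> T"
  shows "cochord_vec V E tail head T m m = 1"
    and "\<And>f. f \<in> T - {m} \<Longrightarrow> cochord_vec V E tail head T m f = 0"
proof -
  have "m \<in> E" using ST m by (auto simp: spanning_tree_def)
  then show "cochord_vec V E tail head T m m = 1"
    using cochord_side(1,2)[OF G ST m] by (simp add: cochord_vec_def Let_def)
  show "cochord_vec V E tail head T m f = 0" if "f \<in> T - {m}" for f
    using cochord_side(3)[OF G ST m that] by (simp add: cochord_vec_def Let_def)
qed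

lemma cochord_vec_coboundary:
  assumes "f \<in> E"
  shows "cochord_vec V E tail head T m f =
           of_bool (tail f \<in> cochord_side V tail head T m)
           - of_bool (head f \<in> cochord_side V tail head T m)"
  using assms by (simp add: cochord_vec_def Let_def)

section \<open>Fundamental cycles\<close>

definition signed_vec :: "('e \<times> bool) list \<Rightarrow> 'e \<Rightarrow> real" where
  "signed_vec ws = (\<lambda>f. if (f, True) \<in> set ws then 1 else if (f, False) \<in> set ws then -1 else 0)"

lemma walk_telescope:
  "is_walk tail head S u ws v \<Longrightarrow>
     (\<Sum>s\<leftarrow>ws. c (step_src tail head s) - c (step_dst tail head s)) = c u - (c v :: real)"
  by (induction ws arbitrary: u) auto

lemma closed_walk_orthogonal:
  assumes walk: "is_walk tail head S u ws u" and dist: "distinct (map fst ws)"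
  shows "(\<Sum>f\<in>fst ` set ws. signed_vec ws f * (c (tail f) - c (head f))) = 0"
proof -
  have inj: "inj_on fst (set ws)" using dist by (simp add: distinct_map)
  have step: "c (step_src tail head s) - c (step_dst tail head s)
                = signed_vec ws (fst s) * (c (tail (fst s)) - c (head (fst s)))"
    if s: "s \<in> set ws" for s
  proof -
    obtain f d where sfd: "s = (f, d)" by fastforce
    have "(f, \<not> d) \<notin> set ws" using inj_onD[OF inj, of s "(f, \<not> d)"] s sfd by auto
    then show ?thesis using s sfd by (cases d) (auto simp: signed_vec_def step_src_def step_dst_def)
  qed
  have "0 = (\<Sum>s\<leftarrow>ws. c (step_src tail head s) - c (step_dst tail head s))"
    using walk_telescope[OF walk] by simp
  also have "\<dots> = (\<Sum>s\<in>set ws. c (step_src tail head s) - c (step_dst tail head s))"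
    using dist by (simp add: distinct_map sum_list_distinct_conv_sum_set)
  also have "\<dots> = (\<Sum>s\<in>set ws. signed_vec ws (fst s) * (c (tail (fst s)) - c (head (fst s))))"
    using step by (rule sum.cong[OF refl])
  also have "\<dots> = (\<Sum>f\<in>fst ` set ws. signed_vec ws f * (c (tail f) - c (head f)))"
    by (simp add: sum.reindex[OF inj])
  finally show ?thesis by simp
qed

lemma chord_vec_cycle:
  assumes G: "graph V E tail head" and ST: "spanning_tree V E tail head T" and a: "a \<in> E - T"
  obtains ws where "is_cycle tail head (T \<union> {a}) (tail a) ws" "List.hd ws = (a, True)"
    and "chord_vec tail head T a = signed_vec ws"
proof -
  have "tail a \<in> V" "head a \<in> V" using G a by (auto simp: graph_def)
  then obtain ws where "is_walk tail head T (head a) ws (tail a)"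
    using ST unfolding spanning_tree_def connected_by_def by blast
  from fundamental_cycle[OF this] a
  have ex: "\<exists>ws. is_cycle tail head (T \<union> {a}) (tail a) ws \<and> List.hd ws = (a, True)" by force
  define ws where "ws = (SOME ws. is_cycle tail head (T \<union> {a}) (tail a) ws \<and> List.hd ws = (a, True))"
  have "is_cycle tail head (T \<union> {a}) (tail a) ws \<and> List.hd ws = (a, True)"
    unfolding ws_def by (rule someI_ex[OF ex])
  moreover have "chord_vec tail head T a = signed_vec ws"
    unfolding chord_vec_def signed_vec_def ws_def Let_def ..
  ultimately show ?thesis using that by blast
qed

lemma signed_vec_off_walk: "f \<notin> fst ` set ws \<Longrightarrow> signed_vec ws f = 0"
  by (auto simp: signed_vec_def image_iff)

lemma chord_vec_on_chords:
  assumes G: "graph V E tail head" and ST: "spanning_tree V E tail head T" and a: "a \<in> E - T"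
  shows "chord_vec tail head T a a = 1"
    and "\<And>f. f \<notin> T \<Longrightarrow> f \<noteq> a \<Longrightarrow> chord_vec tail head T a f = 0"
proof -
  obtain ws where cyc: "is_cycle tail head (T \<union> {a}) (tail a) ws" and hd: "List.hd ws = (a, True)"
    and C: "chord_vec tail head T a = signed_vec ws"
    using chord_vec_cycle[OF G ST a] .
  have "ws \<noteq> []" using cyc unfolding is_cycle_def by blast
  then have "(a, True) \<in> set ws" using hd list.set_sel(1) by metis
  then show "chord_vec tail head T a a = 1" by (simp add: C signed_vec_def)
  have "is_walk tail head (T \<union> {a}) (tail a) ws (tail a)"
    using cyc unfolding is_cycle_def by blast
  from is_walk_edges[OF this] show "chord_vec tail head T a f = 0" if "f \<notin> T" "f \<noteq> a" for f
    using that signed_vec_off_walk[of f ws] by (auto simp: C)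
qed

text \<open>Fact (iii): K_m a = - C_a m.  The fundamental cycle of a is orthogonal to the
  coboundary K_m; on T + a the only nonzero entries of K_m are at a and m.\<close>
lemma cochord_chord_duality:
  assumes G: "graph V E tail head" and ST: "spanning_tree V E tail head T"
    and a: "a \<in> E - T" and m: "m \<in> T"
  shows "cochord_vec V E tail head T m a = - chord_vec tail head T a m"
proof -
  obtain ws where cyc: "is_cycle tail head (T \<union> {a}) (tail a) ws"
    and C: "chord_vec tail head T a = signed_vec ws"
    using chord_vec_cycle[OF G ST a] .
  have walk: "is_walk tail head (T \<union> {a}) (tail a) ws (tail a)" and dist: "distinct (map fst ws)"
    using cyc unfolding is_cycle_def by blast+
  have edges: "fst ` set ws \<subseteq> T \<union> {a}" using is_walk_edges[OF walk] .
  define K where "K = cochord_vec V E tail head T m"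
  define c :: "'a \<Rightarrow> real" where "c v = of_bool (v \<in> cochord_side V tail head T m)" for v
  have TE: "T \<subseteq> E" and fT: "finite T"
    using G ST finite_subset by (auto simp: graph_def spanning_tree_def)
  have K_cobound: "K f = c (tail f) - c (head f)" if "f \<in> T \<union> {a}" for f
    using that TE a by (auto simp: K_def c_def cochord_vec_coboundary)
  let ?h = "\<lambda>f. signed_vec ws f * K f"
  have "(\<Sum>f\<in>fst ` set ws. ?h f)
          = (\<Sum>f\<in>fst ` set ws. signed_vec ws f * (c (tail f) - c (head f)))"
    using edges K_cobound by (intro sum.cong) auto
  then have "0 = (\<Sum>f\<in>fst ` set ws. ?h f)"
    using closed_walk_orthogonal[OF walk dist, of c] by simp
  also have "\<dots> = (\<Sum>f\<in>T \<union> {a}. ?h f)"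
    by (rule sum.mono_neutral_left) (use fT edges signed_vec_off_walk in auto)
  also have "\<dots> = ?h a + ?h m + (\<Sum>f\<in>T - {m}. ?h f)"
    using fT a m by (simp add: sum.remove)
  also have "\<dots> = K a + chord_vec tail head T a m"
    using C chord_vec_on_chords(1)[OF G ST a] cochord_vec_on_tree[OF G ST m] by (simp add: K_def)
  finally show ?thesis by (simp add: K_def)
qed

section \<open>The algebraic identity\<close>

lemma edge_inner_basis:
  assumes "finite E" "x \<in> E"
  shows "edge_inner E (basis_vec x) z = z x"
proof -
  have "(\<Sum>f\<in>E. basis_vec x f * z f) = (\<Sum>f\<in>E. if f = x then z f else 0)"
    by (rule sum.cong) (auto simp: basis_vec_def)
  then show ?thesis using assms by (simp add: edge_inner_def)
qed

lemma edge_inner_unit_on_block: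
  assumes "finite E" "B \<subseteq> E" "x \<in> B" "v x = 1" "\<And>f. f \<in> B - {x} \<Longrightarrow> v f = 0"
  shows "edge_inner E v z = z x + (\<Sum>f\<in>E - B. v f * z f)"
proof -
  have "edge_inner E v z = (\<Sum>f\<in>E - B. v f * z f) + (\<Sum>f\<in>B. v f * z f)"
    unfolding edge_inner_def using sum.subset_diff[OF assms(2,1)] .
  also have "(\<Sum>f\<in>B. v f * z f) = v x * z x + (\<Sum>f\<in>B - {x}. v f * z f)"
    using assms(1-3) finite_subset by (subst sum.remove) auto
  finally show ?thesis using assms(4,5) by simp
qed

lemma elementary_form_expand:
  assumes "\<And>z. edge_inner E v z = z x + (\<Sum>f\<in>R. v f * z f)"
  shows "edge_inner E v u * w x - u x * edge_inner E v w = (\<Sum>f\<in>R. v f * (u f * w x - u x * w f))"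
  by (simp add: assms algebra_simps sum_distrib_left sum_distrib_right sum_subtractf)

lemma dual_forms_agree:
  fixes C K :: "'e \<Rightarrow> 'e \<Rightarrow> real"
  assumes fin: "finite E" and TE: "T \<subseteq> E"
    and C_unit: "\<And>a. a \<in> E - T \<Longrightarrow> C a a = 1"
    and C_zero: "\<And>a f. a \<in> E - T \<Longrightarrow> f \<in> E - T - {a} \<Longrightarrow> C a f = 0"
    and K_unit: "\<And>m. m \<in> T \<Longrightarrow> K m m = 1"
    and K_zero: "\<And>m f. m \<in> T \<Longrightarrow> f \<in> T - {m} \<Longrightarrow> K m f = 0"
    and dual: "\<And>a m. a \<in> E - T \<Longrightarrow> m \<in> T \<Longrightarrow> K m a = - C a m"
  shows "(\<Sum>a\<in>E - T. edge_inner E (C a) u * edge_inner E (basis_vec a) w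
                    - edge_inner E (basis_vec a) u * edge_inner E (C a) w)
       = (\<Sum>m\<in>T. edge_inner E (K m) u * edge_inner E (basis_vec m) w
                    - edge_inner E (basis_vec m) u * edge_inner E (K m) w)"
proof -
  have compl: "E - (E - T) = T" using TE by blast
  have "(\<Sum>a\<in>E - T. edge_inner E (C a) u * edge_inner E (basis_vec a) w
                    - edge_inner E (basis_vec a) u * edge_inner E (C a) w)
      = (\<Sum>a\<in>E - T. \<Sum>m\<in>T. C a m * (u m * w a - u a * w m))"
  proof (rule sum.cong[OF refl])
    fix a assume a: "a \<in> E - T"
    have "edge_inner E (C a) z = z a + (\<Sum>m\<in>T. C a m * z m)" for z
      using edge_inner_unit_on_block[of E "E - T" a "C a"] fin a C_unit C_zero compl by auto
    then have "edge_inner E (C a) u * w a - u a * edge_inner E (C a) w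
             = (\<Sum>m\<in>T. C a m * (u m * w a - u a * w m))"
      by (rule elementary_form_expand)
    then show "edge_inner E (C a) u * edge_inner E (basis_vec a) w
                 - edge_inner E (basis_vec a) u * edge_inner E (C a) w
             = (\<Sum>m\<in>T. C a m * (u m * w a - u a * w m))"
      using a fin by (simp add: edge_inner_basis)
  qed
  also have "\<dots> = (\<Sum>m\<in>T. \<Sum>a\<in>E - T. C a m * (u m * w a - u a * w m))"
    by (rule sum.swap)
  also have "\<dots> = (\<Sum>m\<in>T. edge_inner E (K m) u * edge_inner E (basis_vec m) w
                    - edge_inner E (basis_vec m) u * edge_inner E (K m) w)"
  proof (rule sum.cong[OF refl])
    fix m assume m: "m \<in> T"
    have "edge_inner E (K m) z = z m + (\<Sum>a\<in>E - T. K m a * z a)" for z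
      using edge_inner_unit_on_block[of E T m "K m"] fin TE m K_unit K_zero by auto
    then have "edge_inner E (K m) u * w m - u m * edge_inner E (K m) w
             = (\<Sum>a\<in>E - T. K m a * (u a * w m - u m * w a))"
      by (rule elementary_form_expand)
    then have "edge_inner E (K m) u * edge_inner E (basis_vec m) w
                 - edge_inner E (basis_vec m) u * edge_inner E (K m) w
             = (\<Sum>a\<in>E - T. K m a * (u a * w m - u m * w a))"
      using m fin TE by (simp add: edge_inner_basis subsetD)
    also have "\<dots> = (\<Sum>a\<in>E - T. C a m * (u m * w a - u a * w m))"
      using dual m by (intro sum.cong) (auto simp: algebra_simps)
    finally show "(\<Sum>a\<in>E - T. C a m * (u m * w a - u a * w m))
       = edge_inner E (K m) u * edge_inner E (basis_vec m) w
           - edge_inner E (basis_vec m) u * edge_inner E (K m) w" by simp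
  qed
  finally show ?thesis .
qed

theorem theorem4:
  fixes V :: "'v set" and E :: "'e set" and tail head :: "'e \<Rightarrow> 'v" and T :: "'e set"
  assumes "graph V E tail head"
    and "connected_by V tail head E"
    and "spanning_tree V E tail head T"
  shows "Omega V E tail head T = star_Omega V E tail head T"
proof (intro ext)
  fix u w :: "'e \<Rightarrow> real"
  note G = assms(1) and ST = assms(3)
  have fin: "finite E" and TE: "T \<subseteq> E"
    using G ST by (auto simp: graph_def spanning_tree_def)
  show "Omega V E tail head T u w = star_Omega V E tail head T u w"
    unfolding Omega_def star_Omega_def
    by (rule dual_forms_agree[OF fin TE])
       (use chord_vec_on_chords[OF G ST] cochord_vec_on_tree[OF G ST]
              cochord_chord_duality[OF G ST] in auto)
qed

end
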